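(* Let $M$ be a smooth second countable manifold and $(\mathcal M,G)$ the manifold of Riemannian metrics on $M$ with $G_g(h,k)=\int_M\operatorname{tr}(g^{-1}hg^{-1}k)\operatorname{vol}(g)$. Let $g(t)$ be a geodesic in $\mathcal M$ and $\xi$ a smooth vector field along $g$. Then $\xi$ satisfies the Jacobi equation $\nabla_{\partial_t}\nabla_{\partial_t}\xi=R(\xi,g_t)g_t$ if and only if $$\begin{aligned}\xi_{tt}&=-g_tg^{-1}\xi g^{-1}g_t+g_tg^{-1}\xi_t+\xi_tg^{-1}g_t+\tfrac12\operatorname{tr}(g^{-1}g_tg^{-1}\xi_t)g-\tfrac12\operatorname{tr}(g^{-1}g_tg^{-1}g_tg^{-1}\xi)g\\&\quad+\tfrac12\operatorname{tr}(g^{-1}g_tg^{-1}\xi)g_t-\tfrac12\operatorname{tr}(g^{-1}\xi_t)g_t+\tfrac14\operatorname{tr}(g^{-1}g_tg^{-1}g_t)\xi-\tfrac12\operatorname{tr}(g^{-1}g_t)\xi_t.\end{aligned}$$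
   Context: $T\mathcal M=\mathcal M\times\mathcal D(S^2T^*M)$, $\mathcal D$ denoting compactly supported symmetric 2-tensor fields viewed as maps $TM\to T^*M$; a vector field along $g$ is a curve $\xi(t)\in\mathcal D(S^2T^*M)$, and subscripts $t$ denote $t$-derivatives. The Levi-Civita connection has Christoffel symbol $\Gamma_g(h,k)=\tfrac12hg^{-1}k+\tfrac12kg^{-1}h+\tfrac14\operatorname{tr}(g^{-1}hg^{-1}k)g-\tfrac14\operatorname{tr}(g^{-1}h)k-\tfrac14\operatorname{tr}(g^{-1}k)h$, with $\nabla_{\partial_t}\xi=\xi_t-\Gamma_g(g_t,\xi)$; geodesics satisfy $g_{tt}=\Gamma_g(g_t,g_t)$; and the curvature is $R_g(h,k)\ell=d\Gamma(h)(k,\ell)-d\Gamma(k)(h,\ell)-\Gamma_g(h,\Gamma_g(k,\ell))+\Gamma_g(k,\Gamma_g(h,\ell))$, where $d\Gamma(h)$ is the derivative of $g\mapsto\Gamma_g$ in direction $h$. *)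

theory Defs
  imports "HOL-Analysis.Analysis"
begin

(* Pointwise (fibrewise) objects: a symmetric 2-tensor at a point of M, written
   in a frame of T_xM, is a matrix real^'n^'n viewed as a map T M -> T^*M. *)

type_synonym 'n mat = "real^'n^'n"

definition sym_mat :: "'n::finite mat \<Rightarrow> bool" where
  "sym_mat A \<longleftrightarrow> transpose A = A"

definition pos_def_sym :: "'n::finite mat \<Rightarrow> bool" where
  "pos_def_sym A \<longleftrightarrow> sym_mat A \<and> (\<forall>v. v \<noteq> 0 \<longrightarrow> v \<bullet> (A *v v) > 0)"

definition Gam :: "'n::finite mat \<Rightarrow> 'n mat \<Rightarrow> 'n mat \<Rightarrow> 'n mat" where
  "Gam g h k =
     (1/2) *\<^sub>R (h ** matrix_inv g ** k) + (1/2) *\<^sub>R (k ** matrix_inv g ** h)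
   + (1/4 * trace (matrix_inv g ** h ** matrix_inv g ** k)) *\<^sub>R g
   - (1/4 * trace (matrix_inv g ** h)) *\<^sub>R k
   - (1/4 * trace (matrix_inv g ** k)) *\<^sub>R h"

definition dGam :: "'n::finite mat \<Rightarrow> 'n mat \<Rightarrow> 'n mat \<Rightarrow> 'n mat \<Rightarrow> 'n mat" where
  "dGam g h k l = vector_derivative (\<lambda>s. Gam (g + s *\<^sub>R h) k l) (at 0)"

definition Rm :: "'n::finite mat \<Rightarrow> 'n mat \<Rightarrow> 'n mat \<Rightarrow> 'n mat \<Rightarrow> 'n mat" where
  "Rm g h k l = dGam g h k l - dGam g k h l - Gam g h (Gam g k l) + Gam g k (Gam g h l)"

definition vd :: "(real \<Rightarrow> 'a::real_normed_vector) \<Rightarrow> real \<Rightarrow> 'a" where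
  "vd c t = vector_derivative c (at t)"

definition cov :: "(real \<Rightarrow> 'n::finite mat) \<Rightarrow> (real \<Rightarrow> 'n mat) \<Rightarrow> real \<Rightarrow> 'n mat" where
  "cov c X t = vd X t - Gam (c t) (vd c t) (X t)"

definition smooth_curve :: "real set \<Rightarrow> (real \<Rightarrow> 'a::real_normed_vector) \<Rightarrow> bool" where
  "smooth_curve I c \<longleftrightarrow> (\<exists>D :: nat \<Rightarrow> real \<Rightarrow> 'a. D 0 = c \<and>
      (\<forall>k. \<forall>t\<in>I. (D k has_vector_derivative D (Suc k) t) (at t)))"

definition cs_sym_field :: "('m::topological_space \<Rightarrow> 'n::finite mat) \<Rightarrow> bool" where
  "cs_sym_field h \<longleftrightarrow> (\<forall>x. sym_mat (h x)) \<and> compact (closure {x. h x \<noteq> 0})"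

end

theory Submission
  imports Defs
begin

(* Everything happens pointwise in x, for matrix-valued curves in t. By the product rule,
   with (g^-1)_t = -g^-1 g_t g^-1,
     nabla_t nabla_t xi = xi_tt - dGamma(g_t)(g_t,xi) - Gamma(g_tt,xi) - 2 Gamma(g_t,xi_t)
                          + Gamma(g_t,Gamma(g_t,xi)).
   By the geodesic equation and the symmetry of Gamma and dGamma in their last two
   arguments, R(xi,g_t)g_t is dGamma(xi)(g_t,g_t) plus the second, third and fifth of these
   terms. So the Jacobi equation reads xi_tt = 2 Gamma(g_t,xi_t) + dGamma(xi)(g_t,g_t), and
   writing out Gamma and dGamma, using cyclicity of the trace, gives the formula. *)

lemma bounded_bilinear_matrix_matrix_mult:
  "bounded_bilinear ((**) :: real^'n::finite^'m::finite \<Rightarrow> real^'p::finite^'n \<Rightarrow> real^'p^'m)"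
proof -
  have "bilinear ((**) :: real^'n^'m \<Rightarrow> real^'p^'n \<Rightarrow> real^'p^'m)"
    unfolding bilinear_def linear_iff
    by (auto simp: vec_eq_iff matrix_matrix_mult_def sum.distrib algebra_simps sum_distrib_left)
  then show ?thesis
    by (rule bilinear_conv_bounded_bilinear[THEN iffD1])
qed

lemma trace_scaleR: "trace (r *\<^sub>R A) = r * trace (A :: real^'n::finite^'n)"
  by (simp add: trace_def sum_distrib_left)

lemma bounded_linear_trace: "bounded_linear (trace :: real^'n::finite^'n \<Rightarrow> real)"
proof -
  have "linear (trace :: real^'n^'n \<Rightarrow> real)"
    by (rule linearI) (simp_all add: trace_add trace_scaleR)
  then show ?thesis
    by (rule linear_conv_bounded_linear[THEN iffD1])
qed

lemma
  fixes A :: "real^'n::finite^'n"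
  assumes "invertible A"
  shows matrix_inv_right: "A ** matrix_inv A = mat 1"
    and matrix_inv_left: "matrix_inv A ** A = mat 1"
proof -
  have "A ** matrix_inv A = mat 1 \<and> matrix_inv A ** A = mat 1"
    using assms unfolding matrix_inv_def invertible_def by (rule someI_ex)
  then show "A ** matrix_inv A = mat 1" "matrix_inv A ** A = mat 1"
    by auto
qed

lemma pos_def_sym_invertible:
  fixes A :: "real^'n::finite^'n"
  assumes "pos_def_sym A"
  shows "invertible A"
  unfolding invertible_left_inverse matrix_left_invertible_ker
  using assms by (metis inner_zero_right less_irrefl pos_def_sym_def)

lemma tendsto_det:
  fixes c :: "'a \<Rightarrow> real^'n::finite^'n"
  assumes "(c \<longlongrightarrow> A) F"
  shows "((\<lambda>s. det (c s)) \<longlongrightarrow> det A) F"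
  unfolding det_def by (intro tendsto_intros assms)

(* Continuity of the inverse is read off from Cramer's rule. *)
definition cramer_inverse :: "real^'n::finite^'n \<Rightarrow> real^'n^'n" where
  "cramer_inverse A =
     (\<chi> k j. det (\<chi> i l. if l = k then (if i = j then 1 else 0) else A$i$l) / det A)"

lemma matrix_inv_eq_cramer_inverse:
  fixes A :: "real^'n::finite^'n"
  assumes "det A \<noteq> 0"
  shows "matrix_inv A = cramer_inverse A"
proof -
  have inv: "invertible A"
    using assms invertible_det_nz by blast
  have "matrix_inv A $ k $ j = cramer_inverse A $ k $ j" for k j
  proof -
    let ?x = "\<chi> k. matrix_inv A $ k $ j"
    let ?b = "\<chi> i. if i = j then 1 else (0::real)"
    have "A *v ?x = ?b"
      using matrix_inv_right[OF inv]
      by (simp add: vec_eq_iff matrix_vector_mult_def matrix_matrix_mult_def mat_def)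
    then have "?x = (\<chi> k. det (\<chi> i l. if l = k then ?b$i else A$i$l) / det A)"
      using cramer[OF assms] by blast
    then show ?thesis
      unfolding cramer_inverse_def by (simp add: vec_eq_iff cong: if_cong)
  qed
  then show ?thesis
    by (simp add: vec_eq_iff)
qed

lemma tendsto_cramer_inverse:
  fixes c :: "'a \<Rightarrow> real^'n::finite^'n"
  assumes "(c \<longlongrightarrow> A) F" "det A \<noteq> 0"
  shows "((\<lambda>s. cramer_inverse (c s)) \<longlongrightarrow> cramer_inverse A) F"
  unfolding cramer_inverse_def
  by (intro tendsto_intros tendsto_det assms(2)) (use assms(1) in \<open>auto intro!: tendsto_intros\<close>)

lemma tendsto_matrix_inv:
  fixes c :: "'a \<Rightarrow> real^'n::finite^'n"
  assumes lim: "(c \<longlongrightarrow> A) F" and inv: "invertible A"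
  shows "((\<lambda>s. matrix_inv (c s)) \<longlongrightarrow> matrix_inv A) F"
proof -
  have det: "det A \<noteq> 0"
    using inv invertible_det_nz by blast
  have "eventually (\<lambda>s. det (c s) \<noteq> 0) F"
    using tendsto_imp_eventually_ne[OF tendsto_det[OF lim] det] .
  then have "eventually (\<lambda>s. cramer_inverse (c s) = matrix_inv (c s)) F"
    by eventually_elim (simp add: matrix_inv_eq_cramer_inverse)
  moreover have "((\<lambda>s. cramer_inverse (c s)) \<longlongrightarrow> matrix_inv A) F"
    using tendsto_cramer_inverse[OF lim det] by (simp add: matrix_inv_eq_cramer_inverse[OF det])
  ultimately show ?thesis
    by (rule Lim_transform_eventually[rotated])
qed

lemma has_vector_derivative_iff_difference_quotient:
  fixes f :: "real \<Rightarrow> 'a::real_normed_vector"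
  shows "(f has_vector_derivative f') (at t) \<longleftrightarrow>
         ((\<lambda>s. (f s - f t) /\<^sub>R (s - t)) \<longlongrightarrow> f') (at t)"
proof -
  have quotient: "norm ((f s - f t - (s - t) *\<^sub>R f') /\<^sub>R norm (s - t))
                  = norm ((f s - f t) /\<^sub>R (s - t) - f')" if "s \<noteq> t" for s
  proof -
    have "f s - f t - (s - t) *\<^sub>R f' = (s - t) *\<^sub>R ((f s - f t) /\<^sub>R (s - t) - f')"
      using that by (simp add: scaleR_diff_right)
    then show ?thesis
      using that by (simp add: abs_mult)
  qed
  have "(f has_vector_derivative f') (at t) \<longleftrightarrow>
        ((\<lambda>s. (f s - f t - (s - t) *\<^sub>R f') /\<^sub>R norm (s - t)) \<longlongrightarrow> 0) (at t)"
    unfolding has_vector_derivative_def has_derivative_at_within[where s=UNIV, simplified]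
    using bounded_linear_scaleR_left by blast
  also have "\<dots> \<longleftrightarrow> ((\<lambda>s. norm ((f s - f t - (s - t) *\<^sub>R f') /\<^sub>R norm (s - t))) \<longlongrightarrow> 0) (at t)"
    by (rule tendsto_norm_zero_iff[symmetric])
  also have "\<dots> \<longleftrightarrow> ((\<lambda>s. norm ((f s - f t) /\<^sub>R (s - t) - f')) \<longlongrightarrow> 0) (at t)"
    by (rule tendsto_cong, rule eventually_mono[OF eventually_neq_at_within]) (rule quotient)
  also have "\<dots> \<longleftrightarrow> ((\<lambda>s. (f s - f t) /\<^sub>R (s - t)) \<longlongrightarrow> f') (at t)"
    by (simp add: tendsto_norm_zero_iff Lim_null[symmetric])
  finally show ?thesis .
qed

lemma has_vector_derivative_matrix_inv:
  fixes c :: "real \<Rightarrow> real^'n::finite^'n"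
  assumes c: "(c has_vector_derivative c') (at t)" and inv: "invertible (c t)"
  shows "((\<lambda>s. matrix_inv (c s)) has_vector_derivative
           - (matrix_inv (c t) ** c' ** matrix_inv (c t))) (at t)"
proof -
  interpret mm: bounded_bilinear "(**) :: real^'n^'n \<Rightarrow> real^'n^'n \<Rightarrow> real^'n^'n"
    by (rule bounded_bilinear_matrix_matrix_mult)
  let ?B = "\<lambda>s. matrix_inv (c s)"
  have "(c \<longlongrightarrow> c t) (at t)"
    using has_vector_derivative_continuous[OF c] by (simp add: continuous_at)
  then have B: "(?B \<longlongrightarrow> ?B t) (at t)" and invertible_near: "eventually (\<lambda>s. invertible (c s)) (at t)"
    using tendsto_matrix_inv[OF _ inv] tendsto_imp_eventually_ne[OF tendsto_det] inv
    by (auto simp: invertible_det_nz)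
  from invertible_near have "eventually (\<lambda>s. - (?B s ** ((c s - c t) /\<^sub>R (s - t)) ** ?B t)
               = (?B s - ?B t) /\<^sub>R (s - t)) (at t)"
  proof eventually_elim
    case (elim s)
    have "?B s ** (c s - c t) ** ?B t = ?B s ** c s ** ?B t - ?B s ** (c t ** ?B t)"
      by (simp add: mm.diff_right mm.diff_left matrix_mul_assoc)
    also have "\<dots> = ?B t - ?B s"
      using matrix_inv_left[OF elim] matrix_inv_right[OF inv] by simp
    finally show ?case
      by (metis minus_diff_eq mm.scaleR_left mm.scaleR_right scaleR_minus_right)
  qed
  moreover have "((\<lambda>s. - (?B s ** ((c s - c t) /\<^sub>R (s - t)) ** ?B t))
                  \<longlongrightarrow> - (?B t ** c' ** ?B t)) (at t)"
    using c unfolding has_vector_derivative_iff_difference_quotient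
    by (intro tendsto_minus mm.tendsto B tendsto_const)
  ultimately show ?thesis
    unfolding has_vector_derivative_iff_difference_quotient
    by (rule Lim_transform_eventually[rotated])
qed

(* Explicit form of dGam, from d(g^-1)(c) = -g^-1 c g^-1. *)
definition Gam_variation :: "'n::finite mat \<Rightarrow> 'n mat \<Rightarrow> 'n mat \<Rightarrow> 'n mat \<Rightarrow> 'n mat" where
  "Gam_variation g c h k = (let Gi = matrix_inv g in
     - (1/2) *\<^sub>R (h ** Gi ** c ** Gi ** k) - (1/2) *\<^sub>R (k ** Gi ** c ** Gi ** h)
   - (1/4 * trace (Gi ** c ** Gi ** h ** Gi ** k + Gi ** h ** Gi ** c ** Gi ** k)) *\<^sub>R g
   + (1/4 * trace (Gi ** h ** Gi ** k)) *\<^sub>R c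
   + (1/4 * trace (Gi ** c ** Gi ** h)) *\<^sub>R k + (1/4 * trace (Gi ** c ** Gi ** k)) *\<^sub>R h)"

lemma has_vector_derivative_Gam:
  fixes c h k :: "real \<Rightarrow> 'n::finite mat"
  assumes c: "(c has_vector_derivative c') (at t)"
    and h: "(h has_vector_derivative h') (at t)"
    and k: "(k has_vector_derivative k') (at t)"
    and inv: "invertible (c t)"
  shows "((\<lambda>s. Gam (c s) (h s) (k s)) has_vector_derivative
           Gam_variation (c t) c' (h t) (k t) + Gam (c t) h' (k t) + Gam (c t) (h t) k') (at t)"
proof -
  interpret mm: bounded_bilinear "(**) :: 'n mat \<Rightarrow> 'n mat \<Rightarrow> 'n mat"
    by (rule bounded_bilinear_matrix_matrix_mult)
  have product: "((\<lambda>s. A s ** B s) has_vector_derivative A t ** B' + A' ** B t) (at t)"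
    if "(A has_vector_derivative A') (at t)" "(B has_vector_derivative B') (at t)"
    for A B :: "real \<Rightarrow> 'n mat" and A' B'
    using mm.has_vector_derivative[OF that] .
  have scale: "((\<lambda>s. r *\<^sub>R A s) has_vector_derivative r *\<^sub>R A') (at t)"
    if "(A has_vector_derivative A') (at t)" for r and A :: "real \<Rightarrow> 'n mat" and A'
    using bounded_linear.has_vector_derivative[OF bounded_linear_scaleR_right that] .
  have trace_scale: "((\<lambda>s. (r * trace (A s)) *\<^sub>R B s) has_vector_derivative
                      (r * trace (A t)) *\<^sub>R B' + (r * trace A') *\<^sub>R B t) (at t)"
    if "(A has_vector_derivative A') (at t)" "(B has_vector_derivative B') (at t)"
    for r and A B :: "real \<Rightarrow> 'n mat" and A' B'
  proof -
    have "((\<lambda>s. trace (A s)) has_vector_derivative trace A') (at t)"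
      using bounded_linear.has_vector_derivative[OF bounded_linear_trace that(1)] .
    then have "((\<lambda>s. r * trace (A s)) has_field_derivative r * trace A') (at t)"
      by (intro DERIV_cmult) (simp add: has_real_derivative_iff_has_vector_derivative)
    from has_vector_derivative_scaleR[OF this that(2)] show ?thesis .
  qed
  note inverse = has_vector_derivative_matrix_inv[OF c inv]
  show ?thesis
    unfolding Gam_def
    by (rule has_vector_derivative_eq_rhs,
        (rule has_vector_derivative_diff has_vector_derivative_add scale trace_scale product c h k inverse)+)
      (simp add: Gam_variation_def Gam_def Let_def mm.add_left mm.add_right mm.minus_left
        mm.minus_right mm.diff_left mm.diff_right trace_add trace_sub
        matrix_mul_assoc algebra_simps scaleR_left_distrib scaleR_left_diff_distrib)
qed

lemma dGam_eq_Gam_variation: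
  fixes g :: "'n::finite mat"
  assumes "invertible g"
  shows "dGam g c h k = Gam_variation g c h k"
proof -
  have "((\<lambda>s. g + s *\<^sub>R c) has_vector_derivative c) (at 0)"
    by (auto intro!: derivative_eq_intros)
  from has_vector_derivative_Gam[OF this has_vector_derivative_const has_vector_derivative_const]
  have "((\<lambda>s. Gam (g + s *\<^sub>R c) h k) has_vector_derivative Gam_variation g c h k) (at 0)"
    using assms by (simp add: Gam_def trace_def)
  then show ?thesis
    unfolding dGam_def by (rule vector_derivative_at)
qed

lemma Gam_commute: "Gam g h k = Gam g k h"
proof -
  have "trace (matrix_inv g ** h ** matrix_inv g ** k) = trace (matrix_inv g ** k ** matrix_inv g ** h)"
    using trace_mul_sym[of "matrix_inv g ** h" "matrix_inv g ** k"] by (simp add: matrix_mul_assoc)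
  then show ?thesis
    unfolding Gam_def by (simp add: algebra_simps)
qed

lemma dGam_commute: "dGam g c h k = dGam g c k h"
  unfolding dGam_def by (subst Gam_commute) (rule refl)

lemma Gam_diff_right:
  fixes g :: "'n::finite mat"
  shows "Gam g h (k - l) = Gam g h k - Gam g h l"
proof -
  interpret mm: bounded_bilinear "(**) :: 'n mat \<Rightarrow> 'n mat \<Rightarrow> 'n mat"
    by (rule bounded_bilinear_matrix_matrix_mult)
  show ?thesis
    by (simp add: Gam_def mm.diff_left mm.diff_right trace_sub algebra_simps)
qed

lemma cov_cov_eq:
  fixes c X :: "real \<Rightarrow> 'n::finite mat"
  assumes "c differentiable at t" "vd c differentiable at t"
    and "X differentiable at t" "vd X differentiable at t"
    and inv: "invertible (c t)"
  shows "cov c (cov c X) t =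
           vd (vd X) t - dGam (c t) (vd c t) (vd c t) (X t) - Gam (c t) (vd (vd c) t) (X t)
         - 2 *\<^sub>R Gam (c t) (vd c t) (vd X t) + Gam (c t) (vd c t) (Gam (c t) (vd c t) (X t))"
proof -
  have derivatives: "(c has_vector_derivative vd c t) (at t)" "(vd c has_vector_derivative vd (vd c) t) (at t)"
      "(X has_vector_derivative vd X t) (at t)" "(vd X has_vector_derivative vd (vd X) t) (at t)"
    using assms(1-4) by (simp_all add: vd_def vector_derivative_works[symmetric])
  have "cov c X = (\<lambda>s. vd X s - Gam (c s) (vd c s) (X s))"
    by (simp add: fun_eq_iff cov_def)
  then have "(cov c X has_vector_derivative
      vd (vd X) t - (dGam (c t) (vd c t) (vd c t) (X t) + Gam (c t) (vd (vd c) t) (X t)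
                     + Gam (c t) (vd c t) (vd X t))) (at t)"
    using has_vector_derivative_diff[OF derivatives(4) has_vector_derivative_Gam[OF derivatives(1,2,3) inv]]
    by (simp add: dGam_eq_Gam_variation[OF inv])
  then show ?thesis
    by (simp add: cov_def[of c "cov c X"] vd_def[of "cov c X"] vector_derivative_at)
      (simp add: cov_def Gam_diff_right scaleR_2 algebra_simps)
qed

lemma Jacobi_iff_along_geodesic:
  fixes c X :: "real \<Rightarrow> 'n::finite mat"
  assumes "c differentiable at t" "vd c differentiable at t"
    and "X differentiable at t" "vd X differentiable at t"
    and "invertible (c t)"
    and geodesic: "vd (vd c) t = Gam (c t) (vd c t) (vd c t)"
  shows "cov c (cov c X) t = Rm (c t) (X t) (vd c t) (vd c t) \<longleftrightarrow>
         vd (vd X) t = 2 *\<^sub>R Gam (c t) (vd c t) (vd X t) + dGam (c t) (X t) (vd c t) (vd c t)"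
proof -
  have curvature: "Rm (c t) (X t) (vd c t) (vd c t) =
          dGam (c t) (X t) (vd c t) (vd c t) - dGam (c t) (vd c t) (vd c t) (X t)
        - Gam (c t) (vd (vd c) t) (X t) + Gam (c t) (vd c t) (Gam (c t) (vd c t) (X t))"
    unfolding Rm_def geodesic
    by (metis Gam_commute dGam_commute)
  show ?thesis
    unfolding cov_cov_eq[OF assms(1-5)] curvature by (auto simp: algebra_simps)
qed

lemma Jacobi_iff_explicit_along_geodesic:
  fixes c \<xi> :: "real \<Rightarrow> 'n::finite mat"
  assumes "c differentiable at t" "vd c differentiable at t"
    and "\<xi> differentiable at t" "vd \<xi> differentiable at t"
    and inv: "invertible (c t)"
    and "vd (vd c) t = Gam (c t) (vd c t) (vd c t)"
  shows "cov c (cov c \<xi>) t = Rm (c t) (\<xi> t) (vd c t) (vd c t) \<longleftrightarrow>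
    (let G = c t; Gi = matrix_inv (c t); Gt = vd c t; X = \<xi> t; Xt = vd \<xi> t
     in vd (vd \<xi>) t =
          - (Gt ** Gi ** X ** Gi ** Gt) + Gt ** Gi ** Xt + Xt ** Gi ** Gt
        + (1/2 * trace (Gi ** Gt ** Gi ** Xt)) *\<^sub>R G
        - (1/2 * trace (Gi ** Gt ** Gi ** Gt ** Gi ** X)) *\<^sub>R G
        + (1/2 * trace (Gi ** Gt ** Gi ** X)) *\<^sub>R Gt
        - (1/2 * trace (Gi ** Xt)) *\<^sub>R Gt
        + (1/4 * trace (Gi ** Gt ** Gi ** Gt)) *\<^sub>R X
        - (1/2 * trace (Gi ** Gt)) *\<^sub>R Xt)"
proof -
  define Gi where "Gi = matrix_inv (c t)"
  define Gt where "Gt = vd c t"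
  define X where "X = \<xi> t"
  have "trace (Gi ** X ** Gi ** Gt ** Gi ** Gt) = trace (Gi ** Gt ** Gi ** Gt ** Gi ** X)"
       "trace (Gi ** Gt ** Gi ** X ** Gi ** Gt) = trace (Gi ** Gt ** Gi ** Gt ** Gi ** X)"
       "trace (Gi ** X ** Gi ** Gt) = trace (Gi ** Gt ** Gi ** X)"
    using trace_mul_sym[of "Gi ** X" "Gi ** Gt ** Gi ** Gt"]
      trace_mul_sym[of "Gi ** Gt ** Gi ** X" "Gi ** Gt"] trace_mul_sym[of "Gi ** X" "Gi ** Gt"]
    by (simp_all add: matrix_mul_assoc)
  \<comment> \<open>algebra_simps turns M + M into the entrywise product M * 2\<close>
  moreover have "M * 2 = 2 *\<^sub>R M" for M :: "'n mat"
    by (simp add: vec_eq_iff)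
  ultimately show ?thesis
    unfolding Jacobi_iff_along_geodesic[OF assms] dGam_eq_Gam_variation[OF inv]
    unfolding Gam_variation_def Gam_def Let_def Gi_def[symmetric] Gt_def[symmetric] X_def[symmetric]
    by (simp add: trace_add matrix_mul_assoc algebra_simps scaleR_left_distrib)
qed

lemma smooth_curve_differentiable:
  fixes c :: "real \<Rightarrow> 'a::real_normed_vector"
  assumes smooth: "smooth_curve I c" and I: "open I" "t \<in> I"
  shows "c differentiable at t" "vd c differentiable at t"
proof -
  obtain D where D0: "D 0 = c" and D: "\<And>k s. s \<in> I \<Longrightarrow> (D k has_vector_derivative D (Suc k) s) (at s)"
    using smooth unfolding smooth_curve_def by blast
  have "D 1 s = vd c s" if "s \<in> I" for s
    using D[OF that, of 0] D0 by (simp add: vd_def vector_derivative_at)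
  then have "(vd c has_vector_derivative D 2 t) (at t)"
    using has_vector_derivative_transform_within_open[OF D[OF I(2), of 1] I]
    by (simp add: numeral_2_eq_2)
  then show "c differentiable at t" "vd c differentiable at t"
    using D[OF I(2), of 0] D0 by (auto simp: differentiable_def has_vector_derivative_def)
qed

theorem lemma4p2:
  fixes g \<xi> :: "real \<Rightarrow> 'm::{second_countable_topology, t2_space} \<Rightarrow> real^'n::finite^'n"
    and I :: "real set"
  assumes I: "open I" "is_interval I"
    and metric: "\<forall>t\<in>I. \<forall>x. pos_def_sym (g t x)"
    and g_smooth: "\<forall>x. smooth_curve I (\<lambda>s. g s x)"
    and g_tangent: "\<forall>t\<in>I. cs_sym_field (\<lambda>x. vd (\<lambda>s. g s x) t)"
    and geodesic: "\<forall>t\<in>I. \<forall>x. vd (vd (\<lambda>s. g s x)) t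
                     = Gam (g t x) (vd (\<lambda>s. g s x) t) (vd (\<lambda>s. g s x) t)"
    and xi_smooth: "\<forall>x. smooth_curve I (\<lambda>s. \<xi> s x)"
    and xi_field: "\<forall>t\<in>I. cs_sym_field (\<xi> t)"
  shows "(\<forall>t\<in>I. \<forall>x.
            cov (\<lambda>s. g s x) (cov (\<lambda>s. g s x) (\<lambda>s. \<xi> s x)) t
          = Rm (g t x) (\<xi> t x) (vd (\<lambda>s. g s x) t) (vd (\<lambda>s. g s x) t))
    \<longleftrightarrow>
    (\<forall>t\<in>I. \<forall>x.
      (let G = g t x; Gi = matrix_inv (g t x); Gt = vd (\<lambda>s. g s x) t;
           X = \<xi> t x; Xt = vd (\<lambda>s. \<xi> s x) t
       in vd (vd (\<lambda>s. \<xi> s x)) t =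
            - (Gt ** Gi ** X ** Gi ** Gt) + Gt ** Gi ** Xt + Xt ** Gi ** Gt
          + (1/2 * trace (Gi ** Gt ** Gi ** Xt)) *\<^sub>R G
          - (1/2 * trace (Gi ** Gt ** Gi ** Gt ** Gi ** X)) *\<^sub>R G
          + (1/2 * trace (Gi ** Gt ** Gi ** X)) *\<^sub>R Gt
          - (1/2 * trace (Gi ** Xt)) *\<^sub>R Gt
          + (1/4 * trace (Gi ** Gt ** Gi ** Gt)) *\<^sub>R X
          - (1/2 * trace (Gi ** Gt)) *\<^sub>R Xt))"
proof -
  have "invertible (g t x)" if "t \<in> I" for t x
    using metric that pos_def_sym_invertible by blast
  then show ?thesis
    using Jacobi_iff_explicit_along_geodesic[OF
        smooth_curve_differentiable[OF g_smooth[rule_format] I(1)]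
        smooth_curve_differentiable[OF xi_smooth[rule_format] I(1)] _ geodesic[rule_format]]
    by blast
qed

end
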